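(* Let $n\ge\ell\ge1$ and $s\ge1$ be integers and let $\underline{\eta}=(\eta_1,\dots,\eta_s)$ be integer thresholds with $1\le\eta_1<\dots<\eta_s\le\ell$. There exists a binary matrix $\mathbf{K}$ with $n$ columns and $\big\lceil\log_{s+1}\big(\frac{n-\ell+1}{\ell}\big)\big\rceil$ rows such that for all $i,j\in\{0,\dots,n-\ell\}$ with $|i-j|>\ell+1$ one has $\underline{\eta}(\mathbf{K}\mathbf{b}_i)\neq\underline{\eta}(\mathbf{K}\mathbf{b}_j)$.
   Context: Items are indexed $0,\dots,n-1$. For $0\le i\le n-\ell$, $\mathbf{b}_i\in\{0,1\}^n$ denotes the burst of length $\ell$ with head $i$: its $t$-th coordinate is $1$ iff $i\le t\le i+\ell-1$. For thresholds $\underline{\eta}=(\eta_1<\dots<\eta_s)$, the SQGT outcome of a nonnegative integer $y$ is $\underline{\eta}(y)=|\{k:\eta_k\le y\}|\in\{0,\dots,s\}$; for a binary matrix $\mathbf{M}$, $\underline{\eta}(\mathbf{M}\mathbf{b})$ is the vector obtained by applying $\underline{\eta}$ to each entry of the integer vector $\mathbf{M}\mathbf{b}$. A matrix with zero rows is allowed (it gives the empty outcome). *)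

theory Defs
  imports Complex_Main
begin

definition burst :: "nat \<Rightarrow> nat \<Rightarrow> nat \<Rightarrow> nat" where
  "burst l i t = (if i \<le> t \<and> t \<le> i + l - 1 then 1 else 0)"

definition binary_matrix :: "nat \<Rightarrow> nat list list \<Rightarrow> bool" where
  "binary_matrix n M \<longleftrightarrow> (\<forall>row \<in> set M. length row = n \<and> set row \<subseteq> {0, 1})"

definition mat_vec :: "nat \<Rightarrow> nat list list \<Rightarrow> (nat \<Rightarrow> nat) \<Rightarrow> nat list" where
  "mat_vec n M b = map (\<lambda>row. \<Sum>t<n. row ! t * b t) M"

definition sqgt :: "nat list \<Rightarrow> nat \<Rightarrow> nat" where
  "sqgt eta y = card {k. k < length eta \<and> eta ! k \<le> y}"

definition sqgt_vec :: "nat list \<Rightarrow> nat list \<Rightarrow> nat list" where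
  "sqgt_vec eta ys = map (sqgt eta) ys"

end

theory Submission
  imports Defs
begin

text \<open>A row x of K contributes the window sum of x over [i, i + l) for the burst with head i,
  and this sum changes by at most one when i moves by one. The rows therefore form a reflected
  (s + 1)-ary Gray code of the head (s = length eta), each quantized window sum being one digit. The top row of
  a code is a ramp whose window sum crosses the thresholds exactly at the boundaries of s + 1
  consecutive blocks; below it every block carries a copy of the code of the previous level,
  mirrored in odd blocks, so that copies in neighbouring blocks agree on the columns that
  windows near their common boundary read. Two heads more than l + 1 apart lie in different
  blocks on some level and are separated by that level's ramp. With m rows the code covers
  l (s + 1)^m + 1 heads, which is at least n - l + 1 for the stated m.\<close>

definition window_sum :: "nat \<Rightarrow> (nat \<Rightarrow> nat) \<Rightarrow> nat \<Rightarrow> nat" where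
  "window_sum l f i = (\<Sum>t = i..<i + l. f t)"

lemma window_sum_Suc: "window_sum l f (Suc i) + f i = window_sum l f i + f (i + l)"
  unfolding window_sum_def
  by (cases l) (simp_all add: sum.atLeast_Suc_lessThan add.commute)

lemma window_sum_mono:
  assumes "\<And>t. f t \<le> f (t + l)" and "i \<le> j"
  shows "window_sum l f i \<le> window_sum l f j"
  using lift_Suc_mono_le[of "window_sum l f", OF _ assms(2)] window_sum_Suc assms(1)
  by (metis add_le_cancel_left add.commute)

lemma window_sum_le:
  "(\<And>t. i \<le> t \<Longrightarrow> t < i + l \<Longrightarrow> f t \<le> g t) \<Longrightarrow> window_sum l f i \<le> window_sum l g i"
  unfolding window_sum_def by (rule sum_mono) auto

lemma window_sum_cong:
  "(\<And>t. i \<le> t \<Longrightarrow> t < i + l \<Longrightarrow> f t = g t) \<Longrightarrow> window_sum l f i = window_sum l g i"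
  unfolding window_sum_def by (rule sum.cong) auto

lemma window_sum_shift: "c \<le> i \<Longrightarrow> window_sum l (\<lambda>t. f (t - c)) i = window_sum l f (i - c)"
  unfolding window_sum_def
  by (rule sum.reindex_bij_witness[of _ "\<lambda>u. u + c" "\<lambda>t. t - c"]) auto

lemma window_sum_reflect:
  "i + l \<le> M + 1 \<Longrightarrow> window_sum l (\<lambda>t. f (M - t)) i = window_sum l f (M + 1 - l - i)"
  unfolding window_sum_def
  by (rule sum.reindex_bij_witness[of _ "\<lambda>u. M - u" "\<lambda>t. M - t"]) auto

lemma bij_betw_mod_interval:
  fixes c i l :: nat
  shows "bij_betw (\<lambda>t. (t + c) mod l) {i..<i + l} {..<l}"
proof -
  have inj: "inj_on (\<lambda>t. (t + c) mod l) {i..<i + l}"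
  proof (rule inj_onI)
    have eq: "a = b" if "a \<in> {i..<i + l}" "b \<in> {i..<i + l}" "a \<le> b"
      "(a + c) mod l = (b + c) mod l" for a b :: nat
    proof -
      have "l dvd b - a" using that mod_eq_dvd_iff_nat[of "a + c" "b + c" l] by simp
      moreover have "b - a < l" using that by auto
      ultimately show "a = b" using that(3) by (metis dvd_imp_le le_antisym not_less zero_less_diff)
    qed
    fix x y assume "x \<in> {i..<i + l}" "y \<in> {i..<i + l}" "(x + c) mod l = (y + c) mod l"
    then show "x = y" using eq[of x y] eq[of y x] by (cases "x \<le> y") auto
  qed
  moreover have "(\<lambda>t. (t + c) mod l) ` {i..<i + l} \<subseteq> {..<l}"
    by (cases l) auto
  moreover have "card ((\<lambda>t. (t + c) mod l) ` {i..<i + l}) = card {..<l}"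
    using card_image[OF inj] by simp
  ultimately show ?thesis
    by (simp add: bij_betw_def card_subset_eq)
qed

lemma window_sum_mod: "window_sum l (\<lambda>t. g ((t + c) mod l)) i = (\<Sum>r<l. g r)"
  unfolding window_sum_def using sum.reindex_bij_betw[OF bij_betw_mod_interval, of g] by simp

lemma window_sum_indicator_mod:
  "window_sum l (\<lambda>t. if P ((t + c) mod l) then 1 else 0) i = card {r. r < l \<and> P r}"
  using window_sum_mod[of l "\<lambda>r. if P r then 1 else 0"]
  by (simp add: sum.If_cases lessThan_def Collect_conj_eq Int_commute)

lemma mat_vec_burst:
  assumes "1 \<le> l" and "i + l \<le> n"
  shows "mat_vec n (map (\<lambda>r. map (f r) [0..<n]) rs) (burst l i)
           = map (\<lambda>r. window_sum l (f r) i) rs"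
proof -
  have "(\<Sum>t<n. map (f r) [0..<n] ! t * burst l i t) = window_sum l (f r) i" for r
  proof -
    have "(\<Sum>t<n. map (f r) [0..<n] ! t * burst l i t)
        = (\<Sum>t<n. if t \<in> {i..<i + l} then f r t else 0)"
      using assms(1) by (intro sum.cong) (auto simp: burst_def)
    also have "\<dots> = (\<Sum>t \<in> {..<n} \<inter> {i..<i + l}. f r t)" by (simp add: sum.inter_restrict)
    also have "{..<n} \<inter> {i..<i + l} = {i..<i + l}" using assms(2) by auto
    finally show ?thesis unfolding window_sum_def .
  qed
  then show ?thesis by (simp add: mat_vec_def)
qed

lemma le_power_nat_ceiling_log:
  fixes b x :: real
  assumes "1 < b" and "0 < x"
  shows "x \<le> b ^ nat \<lceil>log b x\<rceil>"
proof -
  have "log b x \<le> real (nat \<lceil>log b x\<rceil>)" by linarith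
  then have "b powr log b x \<le> b powr real (nat \<lceil>log b x\<rceil>)"
    using assms(1) by (intro powr_mono) auto
  then show ?thesis using assms by (simp add: powr_realpow)
qed

lemma sqgt_eqI:
  assumes "sorted_wrt (<) eta" and "j \<le> length eta"
    and "0 < j \<Longrightarrow> eta ! (j - 1) \<le> y" and "j < length eta \<Longrightarrow> y < eta ! j"
  shows "sqgt eta y = j"
proof -
  have mono: "eta ! a \<le> eta ! b" if "a \<le> b" "b < length eta" for a b
    using sorted_nth_mono[OF strict_sorted_imp_sorted[OF assms(1)]] that .
  have "{k. k < length eta \<and> eta ! k \<le> y} = {..<j}"
  proof (intro set_eqI iffI)
    fix k assume "k \<in> {k. k < length eta \<and> eta ! k \<le> y}"
    then show "k \<in> {..<j}"
      using mono[of j k] assms(4) by (cases "j \<le> k") auto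
  next
    fix k assume "k \<in> {..<j}"
    then have "k < j" "k < length eta" "eta ! k \<le> eta ! (j - 1)"
      using mono[of k "j - 1"] assms(2) by auto
    then show "k \<in> {k. k < length eta \<and> eta ! k \<le> y}" using assms(3) by auto
  qed
  then show ?thesis unfolding sqgt_def by simp
qed

lemma diff_add_mod_eq:
  fixes c d l x :: nat
  assumes "0 < l" and "d \<le> (x + c) mod l" and "d \<le> x"
  shows "(x - d + c) mod l = (x + c) mod l - d"
proof -
  have "x - d + c = ((x + c) mod l - d) + l * ((x + c) div l)"
    using assms(2,3) div_mult_mod_eq[of "x + c" l] by (simp add: algebra_simps)
  moreover have "(x + c) mod l - d < l" using assms(1) by (simp add: less_imp_diff_less)
  ultimately show ?thesis by simp
qed

lemma diff_add_mod_eq_wrap: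
  fixes c d l x :: nat
  assumes "(x + c) mod l = 0" and "0 < d" and "d < l" and "d \<le> x"
  shows "(x - d + c) mod l = l - d"
proof -
  obtain m where m: "x + c = l * m" using assms(1) by auto
  then have "0 < m" using assms by (cases m) auto
  then have "x - d + c = (l - d) + l * (m - 1)"
    using m assms(3,4) by (cases m) (simp_all add: algebra_simps)
  then have "(x - d + c) mod l = (l - d) mod l" by simp
  then show ?thesis using assms(2,3) by simp
qed

locale sqgt_thresholds =
  fixes l :: nat and eta :: "nat list"
  assumes l_pos: "1 \<le> l" and eta_nonempty: "eta \<noteq> []"
    and eta_sorted: "sorted_wrt (<) eta" and eta_range: "\<forall>e \<in> set eta. 1 \<le> e \<and> e \<le> l"
begin

lemma threshold_range: "j < length eta \<Longrightarrow> 1 \<le> eta ! j \<and> eta ! j \<le> l"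
  using eta_range nth_mem by blast

lemma threshold_gap: "i \<le> j \<Longrightarrow> j < length eta \<Longrightarrow> eta ! i + (j - i) \<le> eta ! j"
proof (induction j)
  case (Suc j)
  show ?case
  proof (cases "i = Suc j")
    case False
    then have "eta ! i + (j - i) \<le> eta ! j" using Suc by simp
    moreover have "eta ! j < eta ! Suc j" using Suc.prems eta_sorted by (simp add: sorted_wrt_nth_less)
    ultimately show ?thesis using False Suc.prems by simp
  qed simp
qed simp

lemma threshold_ge_index: "j < length eta \<Longrightarrow> j + 1 \<le> eta ! j"
  using threshold_gap[of 0 j] threshold_range[of 0] eta_nonempty by simp

lemma threshold_headroom:
  assumes "j < length eta" shows "eta ! j + (length eta - 1 - j) \<le> l"
proof -
  have "eta ! j + (length eta - 1 - j) \<le> eta ! (length eta - 1)"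
    using threshold_gap[of j "length eta - 1"] assms by simp
  also have "\<dots> \<le> l" using threshold_range[of "length eta - 1"] eta_nonempty by simp
  finally show ?thesis .
qed

lemma length_thresholds_le: "length eta \<le> l"
  using threshold_headroom[of 0] threshold_range[of 0] eta_nonempty by simp

definition block_index :: "nat \<Rightarrow> nat \<Rightarrow> nat \<Rightarrow> nat" where
  "block_index L0 G i = (if i < L0 then 0 else min (length eta) (1 + (i - L0) div G))"

lemma block_index_le: "block_index L0 G i \<le> length eta"
  by (simp add: block_index_def)

lemma block_index_mono:
  assumes "i \<le> i'" shows "block_index L0 G i \<le> block_index L0 G i'"
proof (cases "i < L0")
  case False
  then have "(i - L0) div G \<le> (i' - L0) div G" using assms by (simp add: div_le_mono)
  then show ?thesis using False assms by (simp add: block_index_def min_def)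
qed (simp add: block_index_def)

lemma block_index_eqI:
  assumes "0 < G" and "j \<le> length eta"
    and "0 < j \<Longrightarrow> L0 + (j - 1) * G \<le> i" and "j < length eta \<Longrightarrow> i < L0 + j * G"
  shows "block_index L0 G i = j"
proof (cases j)
  case 0
  then show ?thesis using assms(4) eta_nonempty by (simp add: block_index_def)
next
  case (Suc j')
  then have "j' \<le> (i - L0) div G" "L0 \<le> i"
    using assms(1,3) by (auto simp: less_eq_div_iff_mult_less_eq)
  moreover have "(i - L0) div G < Suc j'" if "j < length eta"
    using assms(1,4) that Suc by (simp add: div_less_iff_less_mult)
  ultimately have "min (length eta) (1 + (i - L0) div G) = j"
    using Suc assms(2) by (cases "j < length eta") (simp_all add: min_def)
  then show ?thesis using \<open>L0 \<le> i\<close> by (simp add: block_index_def)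
qed

lemma block_index_lower:
  assumes "0 < block_index L0 G i" shows "L0 + (block_index L0 G i - 1) * G \<le> i"
proof -
  have "L0 \<le> i" and "block_index L0 G i - 1 \<le> (i - L0) div G"
    using assms by (auto simp: block_index_def split: if_splits)
  then have "(block_index L0 G i - 1) * G \<le> (i - L0) div G * G" by simp
  also have "\<dots> \<le> i - L0" by (rule div_times_less_eq_dividend)
  finally show ?thesis using \<open>L0 \<le> i\<close> by simp
qed

lemma block_index_upper:
  assumes "0 < G" and "block_index L0 G i < length eta"
  shows "i < L0 + block_index L0 G i * G"
proof (cases "i < L0")
  case False
  then have "block_index L0 G i = Suc ((i - L0) div G)"
    using assms(2) by (simp add: block_index_def min_def split: if_splits)
  moreover have "i - L0 < Suc ((i - L0) div G) * G"
    using div_less_iff_less_mult[OF assms(1), of "i - L0" "Suc ((i - L0) div G)"] by simp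
  ultimately have "i - L0 < block_index L0 G i * G" by simp
  then show ?thesis using False by linarith
qed simp

lemma block_index_start: "0 < G \<Longrightarrow> j < length eta \<Longrightarrow> block_index L0 G (L0 + j * G) = j + 1"
  by (simp add: block_index_def)

definition ramp_start :: "nat \<Rightarrow> nat" where
  "ramp_start L0 = L0 + l - 1"

text \<open>The residue of t - ramp_start L0 modulo l, written without truncated subtraction.\<close>
definition ramp_residue :: "nat \<Rightarrow> nat \<Rightarrow> nat" where
  "ramp_residue L0 t = (t + (l - ramp_start L0 mod l)) mod l"

definition ramp_pattern :: "nat \<Rightarrow> nat \<Rightarrow> bool" where
  "ramp_pattern j r \<longleftrightarrow> j = length eta \<or> r < j \<or> l + j + 1 \<le> r + eta ! j"

text \<open>In phase j (the block of t counted from ramp_start L0) the ramp is l-periodic with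
  ones exactly at the residues of ramp_pattern j, of which there are eta ! j - 1 (one short of
  the threshold). Since G \<equiv> 1 (mod l), phase j + 1 begins at residue j, precisely the residue
  that ramp_pattern (j + 1) adds, so the window sum of a head reaches eta ! j when the window's
  last column enters phase j + 1; it then keeps growing until eta ! (j + 1) - 1. Like every row
  of the code, the ramp vanishes on the first l - 1 columns; the hypothesis L0_ge below ensures
  that this removes none of the ones counted by windows with heads in block 1.\<close>
definition ramp :: "nat \<Rightarrow> nat \<Rightarrow> nat \<Rightarrow> nat" where
  "ramp L0 G t =
     (if l - 1 \<le> t \<and> ramp_pattern (block_index (ramp_start L0) G t) (ramp_residue L0 t)
      then 1 else 0)"

lemma ramp_pattern_mono:
  assumes "j \<le> j'" and "j' \<le> length eta" and "ramp_pattern j r"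
  shows "ramp_pattern j' r"
proof (cases "j' = length eta")
  case False
  then have "j' < length eta" "j \<noteq> length eta" using assms(1,2) by auto
  then have "r < j \<or> l + j + 1 \<le> r + eta ! j" "eta ! j + (j' - j) \<le> eta ! j'"
    using assms(3) threshold_gap[OF assms(1)] by (auto simp: ramp_pattern_def)
  then show ?thesis using assms(1) by (auto simp: ramp_pattern_def)
qed (simp add: ramp_pattern_def)

lemma card_ramp_pattern:
  assumes "j < length eta" shows "card {r. r < l \<and> ramp_pattern j r} = eta ! j - 1"
proof -
  have e: "j + 1 \<le> eta ! j" "eta ! j \<le> l"
    using threshold_ge_index[OF assms] threshold_range[OF assms] by auto
  have "{r. r < l \<and> ramp_pattern j r} = {..<j} \<union> {l + j + 1 - eta ! j..<l}"
    using assms e length_thresholds_le by (auto simp: ramp_pattern_def)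
  moreover have "{..<j} \<inter> {l + j + 1 - eta ! j..<l} = {}" using e by auto
  ultimately have "card {r. r < l \<and> ramp_pattern j r} = j + (l - (l + j + 1 - eta ! j))"
    by (simp add: card_Un_disjoint)
  then show ?thesis using e by simp
qed

lemma ramp_residue_add_l: "ramp_residue L0 (t + l) = ramp_residue L0 t"
proof -
  have "t + l + (l - ramp_start L0 mod l) = (t + (l - ramp_start L0 mod l)) + l" by simp
  then show ?thesis unfolding ramp_residue_def by (simp only: mod_add_self2)
qed

lemma ramp_residue_start: "ramp_residue L0 (ramp_start L0) = 0"
proof -
  have "ramp_start L0 mod l < l" using l_pos by simp
  moreover have "ramp_start L0 = l * (ramp_start L0 div l) + ramp_start L0 mod l" by simp
  ultimately have "ramp_start L0 + (l - ramp_start L0 mod l) = l * (ramp_start L0 div l) + l"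
    by linarith
  then show ?thesis unfolding ramp_residue_def by simp
qed

lemma window_sum_ramp_residue:
  "window_sum l (\<lambda>t. if P (ramp_residue L0 t) then 1 else 0) i = card {r. r < l \<and> P r}"
  unfolding ramp_residue_def by (rule window_sum_indicator_mod)

lemma ramp_le_ramp_add_l: "ramp L0 G t \<le> ramp L0 G (t + l)"
proof (cases "ramp L0 G t = 0")
  case False
  then have "l - 1 \<le> t" and "ramp_pattern (block_index (ramp_start L0) G t) (ramp_residue L0 t)"
    by (auto simp: ramp_def split: if_splits)
  moreover have "block_index (ramp_start L0) G t \<le> block_index (ramp_start L0) G (t + l)"
    by (rule block_index_mono) simp
  ultimately show ?thesis
    using ramp_pattern_mono block_index_le ramp_residue_add_l by (simp add: ramp_def)
qed simp

lemma window_sum_ramp_mono: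
  "i \<le> i' \<Longrightarrow> window_sum l (ramp L0 G) i \<le> window_sum l (ramp L0 G) i'"
  using window_sum_mono ramp_le_ramp_add_l by blast

context
  fixes L0 G :: nat
  assumes G_mod: "G mod l = 1 mod l" and G_ge: "l + 1 \<le> G" and L0_ge: "eta ! 0 \<le> L0 + 1"
begin

lemma ramp_residue_phase_start:
  assumes "j < l" shows "ramp_residue L0 (ramp_start L0 + j * G) = j"
proof -
  define c where "c = l - ramp_start L0 mod l"
  have "ramp_residue L0 (ramp_start L0 + j * G) = ((ramp_start L0 + c) + j * G) mod l"
    unfolding ramp_residue_def c_def by (simp add: algebra_simps)
  also have "\<dots> = ((ramp_start L0 + c) mod l + (j * G) mod l) mod l" by (simp add: mod_add_eq)
  also have "(ramp_start L0 + c) mod l = 0"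
    using ramp_residue_start unfolding ramp_residue_def c_def .
  also have "(j * G) mod l = (j * (G mod l)) mod l" by (simp add: mod_mult_right_eq)
  also have "\<dots> = j mod l" using G_mod by (simp add: mod_mult_right_eq)
  finally show ?thesis using assms by simp
qed

lemma ramp_phase_ge:
  assumes "j < length eta" and "ramp_start L0 + j * G \<le> t"
  shows "j + 1 \<le> block_index (ramp_start L0) G t"
  using block_index_mono[OF assms(2), of "ramp_start L0" G]
    block_index_start[of G j "ramp_start L0"] assms(1) G_ge by simp

lemma ramp_at_phase_start:
  assumes "j < length eta" shows "ramp L0 G (ramp_start L0 + j * G) = 1"
proof -
  have "block_index (ramp_start L0) G (ramp_start L0 + j * G) = j + 1"
    using block_index_start assms G_ge by simp
  moreover have "ramp_residue L0 (ramp_start L0 + j * G) = j"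
    using ramp_residue_phase_start assms length_thresholds_le by simp
  moreover have "l - 1 \<le> ramp_start L0 + j * G" by (simp add: ramp_start_def)
  ultimately show ?thesis by (simp add: ramp_def ramp_pattern_def)
qed

lemma window_sum_ramp_upper:
  assumes "j < length eta" and "i + l \<le> ramp_start L0 + j * G"
  shows "window_sum l (ramp L0 G) i \<le> eta ! j - 1"
proof -
  have "window_sum l (ramp L0 G) i
      \<le> window_sum l (\<lambda>t. if ramp_pattern j (ramp_residue L0 t) then 1 else 0) i"
  proof (rule window_sum_le)
    fix t assume "i \<le> t" "t < i + l"
    then have "t < ramp_start L0 + j * G" using assms(2) by simp
    have "block_index (ramp_start L0) G t \<le> j"
    proof (rule ccontr)
      assume "\<not> block_index (ramp_start L0) G t \<le> j"
      then have "ramp_start L0 + j * G \<le> ramp_start L0 + (block_index (ramp_start L0) G t - 1) * G"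
        using G_ge by simp
      also have "\<dots> \<le> t" by (rule block_index_lower) (use \<open>\<not> _ \<le> j\<close> in simp)
      finally show False using \<open>t < ramp_start L0 + j * G\<close> by simp
    qed
    then show "ramp L0 G t \<le> (if ramp_pattern j (ramp_residue L0 t) then 1 else 0)"
      using ramp_pattern_mono[of _ j] assms(1) by (auto simp: ramp_def)
  qed
  also have "\<dots> = eta ! j - 1" by (simp add: window_sum_ramp_residue card_ramp_pattern assms(1))
  finally show ?thesis .
qed

lemma ramp_eq_1_if_pattern:
  assumes "0 < j" and "j \<le> length eta" and "L0 + (j - 1) * G \<le> t"
    and "ramp_pattern (j - 1) (ramp_residue L0 t)"
  shows "ramp L0 G t = 1"
proof -
  have "j - 1 \<le> block_index (ramp_start L0) G t \<and> l - 1 \<le> t"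
  proof (cases "j = 1")
    case True
    have "l - 1 \<le> t"
    proof (rule ccontr)
      assume "\<not> l - 1 \<le> t"
      define d where "d = ramp_start L0 - t"
      have d: "0 < d" "d < l" "d \<le> ramp_start L0"
        using \<open>\<not> l - 1 \<le> t\<close> assms(3) True l_pos unfolding d_def ramp_start_def by auto
      have "ramp_residue L0 t = l - d"
        using diff_add_mod_eq_wrap[of "ramp_start L0" "l - ramp_start L0 mod l" l d]
          ramp_residue_start d \<open>\<not> l - 1 \<le> t\<close>
        unfolding ramp_residue_def d_def ramp_start_def by simp
      then have "d + 1 \<le> eta ! 0"
        using assms(4) True eta_nonempty d by (simp add: ramp_pattern_def)
      then show False using L0_ge \<open>\<not> l - 1 \<le> t\<close> unfolding d_def ramp_start_def by simp
    qed
    then show ?thesis using True by simp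
  next
    case False
    then have "j - 1 = Suc (j - 2)" using assms(1) by simp
    then have "(j - 1) * G = (j - 2) * G + G" by (metis add.commute mult_Suc)
    then have "ramp_start L0 + (j - 2) * G \<le> t" and "G \<le> t"
      using assms(3) G_ge by (simp_all add: ramp_start_def)
    moreover have "j - 2 < length eta" and "Suc (j - 2) = j - 1" using assms(1,2) False by auto
    ultimately show ?thesis using ramp_phase_ge[of "j - 2" t] G_ge by auto
  qed
  then show ?thesis
    using ramp_pattern_mono[OF _ block_index_le assms(4)] by (simp add: ramp_def)
qed

lemma window_sum_ramp_lower:
  assumes "0 < j" and "j \<le> length eta" and "L0 + (j - 1) * G \<le> i"
  shows "eta ! (j - 1) \<le> window_sum l (ramp L0 G) i"
proof -
  define c where "c = L0 + (j - 1) * G"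
  define \<tau> where "\<tau> = ramp_start L0 + (j - 1) * G"
  let ?P = "\<lambda>r. ramp_pattern (j - 1) r \<or> r = j - 1"
  have j: "j - 1 < length eta" "j - 1 < l" using assms(1,2) length_thresholds_le by auto
  have "card {r. r < l \<and> ?P r} = Suc (card {r. r < l \<and> ramp_pattern (j - 1) r})"
  proof -
    have "{r. r < l \<and> ?P r} = insert (j - 1) {r. r < l \<and> ramp_pattern (j - 1) r}"
      using j by auto
    moreover have "\<not> ramp_pattern (j - 1) (j - 1)"
      using j threshold_range[OF j(1)] by (auto simp: ramp_pattern_def)
    ultimately show ?thesis by simp
  qed
  then have "eta ! (j - 1) = window_sum l (\<lambda>t. if ?P (ramp_residue L0 t) then 1 else 0) c"
    using card_ramp_pattern[OF j(1)] threshold_range[OF j(1)] window_sum_ramp_residue[of ?P L0 c]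
    by simp
  also have "\<dots> \<le> window_sum l (ramp L0 G) c"
  proof (rule window_sum_le)
    fix t assume t: "c \<le> t" "t < c + l"
    show "(if ?P (ramp_residue L0 t) then 1 else 0) \<le> ramp L0 G t"
    proof (cases "ramp_residue L0 t = j - 1")
      case True
      \<comment> \<open>the residue is injective on a window, and \<tau> is the column of the window with residue j - 1\<close>
      have "\<tau> \<in> {c..<c + l}" "ramp_residue L0 \<tau> = j - 1"
        using l_pos ramp_residue_phase_start[OF j(2)] unfolding \<tau>_def c_def ramp_start_def by auto
      then have "t = \<tau>"
        using bij_betw_mod_interval t True unfolding bij_betw_def inj_on_def ramp_residue_def
        by (metis atLeastLessThan_iff)
      then show ?thesis using ramp_at_phase_start[OF j(1)] unfolding \<tau>_def by simp
    qed (use ramp_eq_1_if_pattern[OF assms(1,2)] t c_def in auto)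
  qed
  also have "\<dots> \<le> window_sum l (ramp L0 G) i"
    using window_sum_ramp_mono assms(3) unfolding c_def by blast
  finally show ?thesis .
qed

lemma sqgt_window_sum_ramp: "sqgt eta (window_sum l (ramp L0 G) i) = block_index L0 G i"
proof (rule sqgt_eqI[OF eta_sorted block_index_le])
  assume "0 < block_index L0 G i"
  then show "eta ! (block_index L0 G i - 1) \<le> window_sum l (ramp L0 G) i"
    using window_sum_ramp_lower block_index_le block_index_lower by blast
next
  assume j: "block_index L0 G i < length eta"
  then have "i + l \<le> ramp_start L0 + block_index L0 G i * G"
    using block_index_upper[OF _ j] G_ge l_pos unfolding ramp_start_def by simp
  then have "window_sum l (ramp L0 G) i \<le> eta ! block_index L0 G i - 1"
    using window_sum_ramp_upper[OF j] by blast
  then show "window_sum l (ramp L0 G) i < eta ! block_index L0 G i"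
    using threshold_range[OF j] by linarith
qed

lemma ramp_tail:
  assumes "l - length eta \<le> E" and "x < l - 1"
  shows "ramp L0 G (L0 + (length eta - 1) * G + E + x) = 1"
proof -
  define t where "t = L0 + (length eta - 1) * G + E + x"
  define \<tau> where "\<tau> = ramp_start L0 + (length eta - 1) * G"
  have s: "length eta - 1 < length eta" "length eta - 1 < l"
    using eta_nonempty length_thresholds_le l_pos by auto
  show ?thesis
  proof (cases "\<tau> \<le> t")
    case True
    then have "block_index (ramp_start L0) G t = length eta"
      using ramp_phase_ge[OF s(1)] block_index_le[of "ramp_start L0" G t] eta_nonempty
      unfolding \<tau>_def by (simp add: le_antisym)
    moreover have "l - 1 \<le> t" using True unfolding \<tau>_def ramp_start_def by simp
    ultimately show ?thesis unfolding t_def[symmetric] by (simp add: ramp_def ramp_pattern_def)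
  next
    case False
    define d where "d = \<tau> - t"
    have d: "0 < d" "d \<le> length eta - 1" "d \<le> \<tau>"
      using False assms unfolding d_def \<tau>_def t_def ramp_start_def by auto
    have "ramp_residue L0 \<tau> = length eta - 1"
      using ramp_residue_phase_start[OF s(2)] unfolding \<tau>_def .
    then have "ramp_residue L0 t = length eta - 1 - d"
      using diff_add_mod_eq[of l d \<tau> "l - ramp_start L0 mod l"] d l_pos False
      unfolding ramp_residue_def d_def by simp
    moreover have "length eta - 1 - d < length eta - 1" using d by linarith
    ultimately have "ramp_pattern (length eta - 1) (ramp_residue L0 t)"
      by (simp add: ramp_pattern_def)
    then show ?thesis
      using ramp_eq_1_if_pattern[of "length eta" t] eta_nonempty unfolding t_def by simp
  qed
qed

end

definition block_len :: "nat \<Rightarrow> nat" where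
  "block_len k = l * (length eta + 1) ^ k + 1"

text \<open>The last block of every code is shortened by length eta, which keeps all block lengths
  congruent to 1 modulo l, as the ramp requires.\<close>
definition code_len :: "nat \<Rightarrow> bool \<Rightarrow> nat" where
  "code_len k full = (if full then block_len k else block_len k - length eta)"

definition block_full :: "bool \<Rightarrow> nat \<Rightarrow> bool" where
  "block_full full j \<longleftrightarrow> (if j = 0 then full else j \<noteq> length eta)"

definition block_start :: "nat \<Rightarrow> bool \<Rightarrow> nat \<Rightarrow> nat" where
  "block_start k full j = (if j = 0 then 0 else code_len k full + (j - 1) * block_len k)"

text \<open>Block j of the code of level k + 1 holds the code of level k of type block_full full j,
  and row k is the ramp, whose quantized window sum is the block index of the head. Odd blocks
  hold mirror images about the extended block of code_len + l - 1 columns that the windows with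
  heads in the block read.\<close>
fun code :: "nat \<Rightarrow> bool \<Rightarrow> nat \<Rightarrow> nat \<Rightarrow> nat" where
  "code 0 full r t = 0"
| "code (Suc k) full r t =
     (if r < k then
        (let j = block_index (code_len k full) (block_len k) t;
             u = t - block_start k full j;
             full' = block_full full j
         in if even j then code k full' r u else code k full' r (code_len k full' + l - 2 - u))
      else if r = k then ramp (code_len k full) (block_len k) t else 0)"

definition block_copy :: "nat \<Rightarrow> bool \<Rightarrow> nat \<Rightarrow> nat \<Rightarrow> nat \<Rightarrow> nat" where
  "block_copy k full r j t =
     (let u = t - block_start k full j; full' = block_full full j
      in if even j then code k full' r u else code k full' r (code_len k full' + l - 2 - u))"

lemma code_Suc_below:
  "r < k \<Longrightarrow> code (Suc k) full r t
     = block_copy k full r (block_index (code_len k full) (block_len k) t) t"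
  by (simp add: block_copy_def Let_def)

lemma code_Suc_top: "code (Suc k) full k = ramp (code_len k full) (block_len k)"
  by (rule ext) simp

lemma block_len_mod: "block_len k mod l = 1 mod l"
  unfolding block_len_def by (subst add.commute) (rule mod_mult_self2)

lemma block_len_ge: "l + 1 \<le> block_len k"
  using l_pos by (simp add: block_len_def)

lemma code_len_ge: "l + 1 - length eta \<le> code_len k full"
  using block_len_ge[of k] by (cases full) (simp_all add: code_len_def diff_le_mono)

lemma code_len_pos: "0 < code_len k full"
  using code_len_ge[of k full] length_thresholds_le by linarith

lemma threshold_le_code_len: "eta ! 0 \<le> code_len k full + 1"
  using threshold_headroom[of 0] code_len_ge[of k full] eta_nonempty by simp

lemma code_len_ge_l: assumes "0 < k" shows "l \<le> code_len k full"
proof -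
  have "(length eta + 1) ^ 1 \<le> (length eta + 1) ^ k"
    using assms by (intro power_increasing) simp_all
  then have "l * (length eta + 1) \<le> l * (length eta + 1) ^ k"
    by (simp only: power_one_right mult_le_mono2)
  moreover have "l * (length eta + 1) = l + l * length eta" by simp
  moreover have "length eta \<le> l * length eta" using l_pos by simp
  ultimately have "l \<le> l * (length eta + 1) ^ k + 1 - length eta" by linarith
  then show ?thesis by (cases full) (simp_all add: code_len_def block_len_def)
qed

lemma code_len_Suc:
  "code_len (Suc k) full = code_len k full + (length eta - 1) * block_len k + code_len k False"
proof -
  have "block_len (Suc k) + length eta = (length eta + 1) * block_len k"
    by (simp add: block_len_def algebra_simps)
  moreover have "length eta \<le> block_len k" using block_len_ge[of k] length_thresholds_le by simp
  moreover have "(length eta + 1) * block_len k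
      = block_len k + (length eta - 1) * block_len k + block_len k"
    using eta_nonempty by (cases "length eta") (simp_all add: algebra_simps)
  ultimately show ?thesis by (cases full) (simp_all add: code_len_def)
qed

lemma block_start_Suc: "block_start k full (Suc j) = code_len k full + j * block_len k"
  by (simp add: block_start_def)

lemma block_start_Suc_eq:
  "j < length eta \<Longrightarrow> block_start k full (Suc j) = block_start k full j + code_len k (block_full full j)"
  by (cases j) (auto simp: block_start_def block_full_def code_len_def)

lemma block_start_last: "block_start k full (length eta) + code_len k False = code_len (Suc k) full"
  using eta_nonempty code_len_Suc by (simp add: block_start_def)

lemma block_full_last: "block_full full (length eta) = False"
  using eta_nonempty by (simp add: block_full_def)

lemma block_index_code_eqI:
  assumes "j \<le> length eta" and "block_start k full j \<le> t"
    and "j < length eta \<Longrightarrow> t < block_start k full (Suc j)"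
  shows "block_index (code_len k full) (block_len k) t = j"
  using assms block_len_ge[of k]
  by (intro block_index_eqI) (auto simp: block_start_def split: if_splits)

lemma block_start_block_index:
  "block_start k full (block_index (code_len k full) (block_len k) t) \<le> t"
  using block_index_lower[of "code_len k full" "block_len k" t]
  by (auto simp: block_start_def block_index_def)

lemma less_block_start_Suc_block_index:
  "block_index (code_len k full) (block_len k) t < length eta
     \<Longrightarrow> t < block_start k full (Suc (block_index (code_len k full) (block_len k) t))"
  using block_index_upper[of "block_len k" "code_len k full" t] block_len_ge[of k]
  by (simp add: block_start_Suc)

lemma code_le_1: "code k full r t \<le> 1"
proof (induction k arbitrary: full r t)
  case (Suc k)
  then show ?case by (simp add: Let_def ramp_def)
qed simp

lemma code_start_zero: "r < k \<Longrightarrow> t < l - 1 \<Longrightarrow> code k full r t = 0"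
proof (induction k arbitrary: full r)
  case (Suc k)
  show ?case
  proof (cases "r = k")
    case False
    then have "r < k" using Suc.prems(1) by simp
    then have "t < code_len k full" using code_len_ge_l[of k full] Suc.prems(2) by simp
    then have "block_index (code_len k full) (block_len k) t = 0" by (simp add: block_index_def)
    then show ?thesis using Suc.IH[OF \<open>r < k\<close> Suc.prems(2)] \<open>r < k\<close>
      by (simp add: block_start_def block_full_def)
  qed (use Suc.prems(2) in \<open>simp add: ramp_def\<close>)
qed simp

text \<open>The columns just past the end of a code: the ramp is all ones there, and a lower row
  continues the copy in the last block, which is mirrored exactly when length eta is odd (and
  then reads the zero start region).\<close>
definition tail_bit :: "nat \<Rightarrow> nat \<Rightarrow> nat" where
  "tail_bit k r = (if even (length eta) \<or> Suc r = k then 1 else 0)"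

text \<open>The hypothesis is code_tail at level k, which is in turn proved from this lemma.\<close>
lemma code_Suc_eq_block_copy:
  assumes tail: "\<And>full' r' x. r' < k \<Longrightarrow> x < l - 1 \<Longrightarrow>
      code k full' r' (code_len k full' + x) = tail_bit k r'"
    and r: "r < k" and j: "j \<le> length eta" and t: "block_start k full j \<le> t"
    "t < block_start k full j + code_len k (block_full full j) + l - 1"
  shows "code (Suc k) full r t = block_copy k full r j t"
proof (cases "j = length eta \<or> t < block_start k full (Suc j)")
  case True
  then have "block_index (code_len k full) (block_len k) t = j"
    using block_index_code_eqI[OF j t(1)] by auto
  then show ?thesis using code_Suc_below[OF r] by simp
next
  case False
  \<comment> \<open>t lies in the first l - 1 columns of block j + 1, where the two copies agree\<close>
  then have js: "j < length eta" and t': "block_start k full (Suc j) \<le> t" using j by auto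
  have next_start: "block_start k full (Suc j) = block_start k full j + code_len k (block_full full j)"
    using block_start_Suc_eq[OF js] .
  define x where "x = t - block_start k full (Suc j)"
  have x: "x < l - 1" using t(2) t' next_start unfolding x_def by simp
  have "block_index (code_len k full) (block_len k) t = Suc j"
  proof (rule block_index_code_eqI)
    show "t < block_start k full (Suc (Suc j))" if "Suc j < length eta"
      using block_start_Suc_eq[OF that, of k full] code_len_ge_l[of k "block_full full (Suc j)"]
        x t' r unfolding x_def by simp
  qed (use js t' in simp_all)
  then have "code (Suc k) full r t = block_copy k full r (Suc j) t" using code_Suc_below[OF r] by simp
  moreover have "t - block_start k full j = code_len k (block_full full j) + x"
    and "t - block_start k full (Suc j) = x"
    using t' next_start unfolding x_def by simp_all
  moreover have "l - 2 - x < l - 1" and "n + l - 2 - x = n + (l - 2 - x)"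
    and "n + l - 2 - (n + x) = l - 2 - x" for n
    using x by simp_all
  ultimately show ?thesis
    using tail[OF r x] tail[OF r \<open>l - 2 - x < l - 1\<close>] code_start_zero[OF r x]
      code_start_zero[OF r \<open>l - 2 - x < l - 1\<close>]
    by (simp add: block_copy_def Let_def)
qed

lemma code_tail: "r < k \<Longrightarrow> x < l - 1 \<Longrightarrow> code k full r (code_len k full + x) = tail_bit k r"
proof (induction k arbitrary: full r x)
  case (Suc k)
  have last: "code_len (Suc k) full + x = block_start k full (length eta) + code_len k False + x"
    using block_start_last[of k full] by simp
  show ?case
  proof (cases "r = k")
    case True
    have "code_len (Suc k) full + x
        = code_len k full + (length eta - 1) * block_len k + code_len k False + x"
      using code_len_Suc by simp
    moreover have "l - length eta \<le> code_len k False" using code_len_ge[of k False] by simp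
    ultimately show ?thesis
      using ramp_tail[OF block_len_mod block_len_ge threshold_le_code_len] True Suc.prems(2)
      by (simp add: tail_bit_def)
  next
    case False
    then have r: "r < k" using Suc.prems(1) by simp
    have "code (Suc k) full r (code_len (Suc k) full + x)
        = block_copy k full r (length eta) (code_len (Suc k) full + x)"
      using code_Suc_eq_block_copy[OF Suc.IH r] last Suc.prems(2) block_full_last by simp
    also have "\<dots> = (if even (length eta) then code k False r (code_len k False + x)
                     else code k False r (l - 2 - x))"
      using last Suc.prems(2) block_full_last by (simp add: block_copy_def Let_def)
    also have "\<dots> = tail_bit (Suc k) r"
      using Suc.IH[OF r Suc.prems(2)] code_start_zero[OF r, of "l - 2 - x"] r Suc.prems(2)
      by (simp add: tail_bit_def)
    finally show ?thesis .
  qed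
qed simp

lemma window_sum_code_Suc:
  assumes r: "r < k" and j: "j \<le> length eta" and i: "block_start k full j \<le> i"
    "i < block_start k full j + code_len k (block_full full j)"
  shows "window_sum l (code (Suc k) full r) i = window_sum l (code k (block_full full j) r)
     (if even j then i - block_start k full j
      else code_len k (block_full full j) - 1 - (i - block_start k full j))"
proof -
  define a where "a = block_start k full j"
  define n where "n = code_len k (block_full full j)"
  have n: "0 < n" using code_len_pos unfolding n_def .
  have "window_sum l (code (Suc k) full r) i = window_sum l (block_copy k full r j) i"
  proof (rule window_sum_cong)
    fix t assume "i \<le> t" "t < i + l"
    then show "code (Suc k) full r t = block_copy k full r j t"
      using code_tail i by (intro code_Suc_eq_block_copy[OF _ r j]) simp_all
  qed
  also have "\<dots> = window_sum l (code k (block_full full j) r)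
     (if even j then i - a else n - 1 - (i - a))"
  proof (cases "even j")
    case True
    then have "window_sum l (block_copy k full r j) i
        = window_sum l (\<lambda>t. code k (block_full full j) r (t - a)) i"
      unfolding block_copy_def a_def by simp
    then show ?thesis using window_sum_shift i(1) True unfolding a_def by simp
  next
    case False
    define M where "M = a + n + l - 2"
    have "n + l - 2 - (t - a) = M - t" if "a \<le> t" for t
      using that n l_pos unfolding M_def by arith
    then have "window_sum l (block_copy k full r j) i
        = window_sum l (\<lambda>t. code k (block_full full j) r (M - t)) i"
      using False i(1) unfolding a_def n_def
      by (intro window_sum_cong) (simp add: block_copy_def Let_def)
    also have "\<dots> = window_sum l (code k (block_full full j) r) (M + 1 - l - i)"
      by (rule window_sum_reflect) (use i n l_pos in \<open>simp add: M_def a_def n_def\<close>)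
    also have "M + 1 - l - i = n - 1 - (i - a)"
      using i n l_pos unfolding M_def a_def n_def by simp
    finally show ?thesis using False by simp
  qed
  finally show ?thesis unfolding a_def n_def .
qed

lemma block_index_code_bounds:
  assumes "t < code_len (Suc k) full"
  defines "j \<equiv> block_index (code_len k full) (block_len k) t"
  shows "block_start k full j \<le> t" and "t < block_start k full j + code_len k (block_full full j)"
proof -
  show "block_start k full j \<le> t" unfolding j_def by (rule block_start_block_index)
  show "t < block_start k full j + code_len k (block_full full j)"
  proof (cases "j < length eta")
    case True
    then show ?thesis
      using less_block_start_Suc_block_index block_start_Suc_eq unfolding j_def by metis
  next
    case False
    then have "j = length eta" using block_index_le unfolding j_def by (simp add: le_antisym)
    then show ?thesis using assms(1) block_start_last[of k full] block_full_last by simp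
  qed
qed

lemma code_separates:
  assumes "i < code_len k full" and "i' < code_len k full" and "l + 1 < i - i' \<or> l + 1 < i' - i"
  shows "\<exists>r<k. sqgt eta (window_sum l (code k full r) i) \<noteq> sqgt eta (window_sum l (code k full r) i')"
  using assms
proof (induction k arbitrary: full i i')
  case 0
  have "code_len 0 full \<le> l + 1" by (simp add: code_len_def block_len_def)
  then show ?case using 0 by linarith
next
  case (Suc k)
  let ?block = "block_index (code_len k full) (block_len k)"
  show ?case
  proof (cases "?block i = ?block i'")
    case False
    then show ?thesis
      using sqgt_window_sum_ramp[OF block_len_mod block_len_ge threshold_le_code_len] code_Suc_top
      by (intro exI[of _ k]) simp
  next
    case True
    define j where "j = ?block i"
    define a where "a = block_start k full j"
    define n where "n = code_len k (block_full full j)"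
    define local where "local x = (if even j then x - a else n - 1 - (x - a))" for x
    have j: "j \<le> length eta" using block_index_le unfolding j_def by simp
    have i: "a \<le> i" "i < a + n" and i': "a \<le> i'" "i' < a + n"
      using block_index_code_bounds[OF Suc.prems(1)] block_index_code_bounds[OF Suc.prems(2)] True
      unfolding a_def n_def j_def by auto
    have "local i < n" "local i' < n" "l + 1 < local i - local i' \<or> l + 1 < local i' - local i"
      using i i' Suc.prems(3) code_len_pos[of k "block_full full j"] unfolding local_def n_def
      by auto
    then obtain r where "r < k" and r: "sqgt eta (window_sum l (code k (block_full full j) r) (local i))
        \<noteq> sqgt eta (window_sum l (code k (block_full full j) r) (local i'))"
      using Suc.IH unfolding n_def by blast
    moreover have "window_sum l (code (Suc k) full r) x = window_sum l (code k (block_full full j) r) (local x)"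
      if "a \<le> x" "x < a + n" for x
      using window_sum_code_Suc[OF \<open>r < k\<close> j] that unfolding local_def a_def n_def by simp
    ultimately show ?thesis using i i' by (intro exI[of _ r]) (simp del: code.simps)
  qed
qed

lemma separating_matrix_exists:
  assumes "l \<le> n" and "n - l + 1 \<le> block_len m"
  shows "\<exists>K. binary_matrix n K \<and> length K = m \<and>
           (\<forall>i j. i \<le> n - l \<longrightarrow> j \<le> n - l \<longrightarrow> (l + 1 < i - j \<or> l + 1 < j - i) \<longrightarrow>
              sqgt_vec eta (mat_vec n K (burst l i)) \<noteq> sqgt_vec eta (mat_vec n K (burst l j)))"
proof (intro exI conjI allI impI)
  define K where "K = map (\<lambda>r. map (code m True r) [0..<n]) [0..<m]"
  have heads: "i \<le> n - l \<Longrightarrow> i < code_len m True" for i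
    using assms(2) by (simp add: code_len_def)
  have rows: "mat_vec n K (burst l i) = map (\<lambda>r. window_sum l (code m True r) i) [0..<m]"
    if "i \<le> n - l" for i
    unfolding K_def using l_pos assms(1) that by (intro mat_vec_burst) simp_all
  show "binary_matrix n K"
    by (auto simp: K_def binary_matrix_def) (metis One_nat_def Suc_leI code_le_1 le_antisym)
  show "length K = m" by (simp add: K_def)
  fix i j assume i: "i \<le> n - l" and j: "j \<le> n - l" and far: "l + 1 < i - j \<or> l + 1 < j - i"
  obtain r where "r < m"
    and "sqgt eta (window_sum l (code m True r) i) \<noteq> sqgt eta (window_sum l (code m True r) j)"
    using code_separates[OF heads[OF i] heads[OF j] far] by blast
  then show "sqgt_vec eta (mat_vec n K (burst l i)) \<noteq> sqgt_vec eta (mat_vec n K (burst l j))"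
    using rows[OF i] rows[OF j] by (auto simp: sqgt_vec_def dest: arg_cong[where f = "\<lambda>xs. xs ! r"])
qed

end

theorem mainTheorem2:
  fixes n l :: nat and eta :: "nat list"
  assumes "1 \<le> l" and "l \<le> n"
    and "1 \<le> length eta"
    and "sorted_wrt (<) eta"
    and "\<forall>e \<in> set eta. 1 \<le> e \<and> e \<le> l"
  shows "\<exists>K. binary_matrix n K \<and>
           length K = nat \<lceil>log (real (length eta + 1)) (real (n - l + 1) / real l)\<rceil> \<and>
           (\<forall>i j. i \<le> n - l \<longrightarrow> j \<le> n - l \<longrightarrow> \<bar>int i - int j\<bar> > int l + 1 \<longrightarrow>
              sqgt_vec eta (mat_vec n K (burst l i)) \<noteq> sqgt_vec eta (mat_vec n K (burst l j)))"
proof -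
  interpret sqgt_thresholds l eta using assms by unfold_locales auto
  define m where "m = nat \<lceil>log (real (length eta + 1)) (real (n - l + 1) / real l)\<rceil>"
  have "real (n - l + 1) / real l \<le> real (length eta + 1) ^ m"
    unfolding m_def using assms(1,3) by (intro le_power_nat_ceiling_log) auto
  then have "real (n - l + 1) \<le> real (l * (length eta + 1) ^ m)"
    using assms(1) by (simp add: field_simps)
  then have "n - l + 1 \<le> block_len m"
    unfolding of_nat_le_iff block_len_def by simp
  then obtain K where "binary_matrix n K" and "length K = m"
    and sep: "\<And>i j. i \<le> n - l \<Longrightarrow> j \<le> n - l \<Longrightarrow> l + 1 < i - j \<or> l + 1 < j - i \<Longrightarrow>
           sqgt_vec eta (mat_vec n K (burst l i)) \<noteq> sqgt_vec eta (mat_vec n K (burst l j))"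
    using separating_matrix_exists[OF assms(2)] by blast
  show ?thesis
  proof (intro exI conjI allI impI)
    fix i j assume "i \<le> n - l" and "j \<le> n - l" and "int l + 1 < \<bar>int i - int j\<bar>"
    then show "sqgt_vec eta (mat_vec n K (burst l i)) \<noteq> sqgt_vec eta (mat_vec n K (burst l j))"
      by (intro sep) linarith+
  qed (use \<open>binary_matrix n K\<close> \<open>length K = m\<close> m_def in simp_all)
qed

end
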